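(* Let $\mathbb{Z}$ be the infinite line graph with unit weights (vertex set $\mathbb{Z}$, $x\sim y$ iff $|x-y|=1$, $\mu_x=1$, $\omega_{xy}=1$), so that $\Delta u(x)=u(x+1)+u(x-1)-2u(x)$. For every $\epsilon>0$ there exists a function $u:\mathbb{R}\times\mathbb{Z}\to\mathbb{R}$ with $u(\cdot,x)\in C^2(\mathbb{R})$ for each $x$, satisfying $\partial_t^2u(t,x)=\Delta u(t,x)$ for all $(t,x)\in\mathbb{R}\times\mathbb{Z}$, with $u(0,x)=\partial_tu(0,x)=0$ for all $x\in\mathbb{Z}$, such that $u\not\equiv0$, $u$ is not analytic in time (specifically $t\mapsto u(t,0)$ is not real analytic on $\mathbb{R}$), and for every $t\in\mathbb{R}$, $$\lim_{|x|\to\infty}|u(t,x)|\,e^{-(2+\epsilon)|x|\ln|x|}=0.$$ *)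

theory Defs
  imports "HOL-Analysis.Analysis"
begin

definition line_laplacian :: "(int \<Rightarrow> real) \<Rightarrow> int \<Rightarrow> real" where
  "line_laplacian v x = v (x + 1) + v (x - 1) - 2 * v x"

definition real_analytic_on :: "(real \<Rightarrow> real) \<Rightarrow> real set \<Rightarrow> bool" where
  "real_analytic_on f S \<longleftrightarrow>
     (\<forall>x\<in>S. \<exists>r>0. \<exists>c :: nat \<Rightarrow> real.
        \<forall>y. \<bar>y - x\<bar> < r \<longrightarrow> (\<lambda>n. c n * (y - x) ^ n) sums f y)"

end

theory Submission
  imports Defs "HOL-Computational_Algebra.Polynomial" "HOL-Real_Asymp.Real_Asymp"
begin

text \<open>The solution is even in space, u(t,x) = u_|x|(t), and starts from the flat function
  u_0 = phi with phi(t) = exp(-1/t) for t > 0 and phi(t) = 0 otherwise. The equation at x = 0 and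
  at x = n >= 1 forces u_1 = u_0 + u_0''/2 and u_(n+2) = 2 u_(n+1) + u_(n+1)'' - u_n, so u_n is a
  combination of the derivatives phi^(2k), k <= n, with coefficients bounded by 4^n.
  As phi^(m)(t) = P_m(1/t) exp(-1/t) with deg P_m <= 2m and coefficient sum at most (2m+1)^m,
  |u_n(t)| <= C(t)^n n^(2n) = exp(2 n ln n + O(n)). Every phi^(m) vanishes at 0, giving zero
  initial data, and u_0 = phi is not analytic at 0: it vanishes on the left but not on the right.\<close>

primrec flat_poly :: "nat \<Rightarrow> real poly" where
  "flat_poly 0 = 1"
| "flat_poly (Suc m) = [:0, 0, 1:] * (flat_poly m - pderiv (flat_poly m))"

definition flat_deriv :: "nat \<Rightarrow> real \<Rightarrow> real" where
  "flat_deriv m t = (if t > 0 then poly (flat_poly m) (inverse t) * exp (- inverse t) else 0)"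

lemma poly_times_exp_neg_tendsto_0:
  fixes Q :: "real poly"
  shows "((\<lambda>s. poly Q s * exp (- s)) \<longlongrightarrow> 0) at_top"
proof -
  have "((\<lambda>s. \<Sum>i\<le>degree Q. coeff Q i * (s ^ i / exp s)) \<longlongrightarrow> (\<Sum>i\<le>degree Q. coeff Q i * 0)) at_top"
    by (intro tendsto_sum tendsto_mult tendsto_const tendsto_power_div_exp_0)
  moreover have "poly Q s * exp (- s) = (\<Sum>i\<le>degree Q. coeff Q i * (s ^ i / exp s))" for s
    by (simp add: poly_altdef sum_distrib_right exp_minus divide_inverse mult.assoc)
  ultimately show ?thesis by simp
qed

lemma poly_inverse_times_exp_tendsto_0_at_right:
  fixes Q :: "real poly"
  shows "((\<lambda>y. poly Q (inverse y) * exp (- inverse y)) \<longlongrightarrow> 0) (at_right 0)"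
  using filterlim_compose[OF poly_times_exp_neg_tendsto_0 filterlim_inverse_at_top_right] by simp

lemma eventually_neg_at_left_0: "\<forall>\<^sub>F y in at_left (0::real). y < 0"
  unfolding eventually_at_left_field by (intro exI[of _ "-1"]) auto

lemma has_real_derivative_flat_deriv:
  "(flat_deriv m has_real_derivative flat_deriv (Suc m) t) (at t)"
proof -
  consider "t > 0" | "t < 0" | "t = 0" by linarith
  then show ?thesis
  proof cases
    case 1
    have dp: "((\<lambda>y. poly (flat_poly m) (inverse y)) has_real_derivative
        poly (pderiv (flat_poly m)) (inverse t) * (- (inverse t ^ 2))) (at t)"
      using DERIV_chain2[OF poly_DERIV DERIV_inverse[of t UNIV]] 1 by (auto simp: numeral_2_eq_2)
    have de: "((\<lambda>y. exp (- inverse y)) has_real_derivative exp (- inverse t) * inverse t ^ 2) (at t)"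
      using DERIV_chain2[OF DERIV_exp DERIV_minus[OF DERIV_inverse[of t UNIV]]] 1
      by (auto simp: numeral_2_eq_2)
    have "((\<lambda>y. poly (flat_poly m) (inverse y) * exp (- inverse y))
        has_real_derivative flat_deriv (Suc m) t) (at t)"
      using DERIV_mult[OF dp de] 1
      by (simp add: flat_deriv_def poly_mult poly_diff algebra_simps power2_eq_square)
    then show ?thesis
      by (rule has_field_derivative_transform_within_open[where S="{0<..}"])
         (use 1 in \<open>auto simp: flat_deriv_def\<close>)
  next
    case 2
    have "((\<lambda>y. 0) has_real_derivative flat_deriv (Suc m) t) (at t)"
      using 2 by (simp add: flat_deriv_def)
    then show ?thesis
      by (rule has_field_derivative_transform_within_open[where S="{..<0}"])
         (use 2 in \<open>auto simp: flat_deriv_def\<close>)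
  next
    case 3
    let ?q = "\<lambda>y. (flat_deriv m y - flat_deriv m 0) / (y - 0)"
    have "(?q \<longlongrightarrow> 0) (at_left 0)"
      by (rule tendsto_eventually)
         (use eventually_neg_at_left_0 in \<open>eventually_elim, simp add: flat_deriv_def\<close>)
    moreover have "(?q \<longlongrightarrow> 0) (at_right 0)"
    proof (rule Lim_transform_eventually[OF poly_inverse_times_exp_tendsto_0_at_right])
      show "\<forall>\<^sub>F y in at_right 0. poly ([:0, 1:] * flat_poly m) (inverse y) * exp (- inverse y) = ?q y"
        using eventually_at_right_less[of "0::real"]
        by eventually_elim (simp add: flat_deriv_def poly_mult divide_inverse)
    qed
    ultimately have "(?q \<longlongrightarrow> 0) (at 0)"
      using filterlim_at_split by blast
    then show ?thesis
      using 3 by (simp add: has_field_derivative_iff flat_deriv_def)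
  qed
qed

lemma continuous_on_flat_deriv: "continuous_on UNIV (flat_deriv m)"
  by (intro continuous_at_imp_continuous_on ballI DERIV_isCont[OF has_real_derivative_flat_deriv])

definition coeff_norm :: "real poly \<Rightarrow> real" where
  "coeff_norm p = (\<Sum>i\<le>degree p. \<bar>coeff p i\<bar>)"

lemma coeff_norm_eq_sum: "degree p \<le> N \<Longrightarrow> coeff_norm p = (\<Sum>i\<le>N. \<bar>coeff p i\<bar>)"
  unfolding coeff_norm_def by (rule sum.mono_neutral_left) (auto simp: coeff_eq_0)

lemma coeff_norm_nonneg: "coeff_norm p \<ge> 0"
  unfolding coeff_norm_def by (simp add: sum_nonneg)

lemma abs_poly_le_coeff_norm:
  assumes "0 \<le> s" "degree p \<le> N"
  shows "\<bar>poly p s\<bar> \<le> coeff_norm p * max 1 s ^ N"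
proof -
  have "\<bar>poly p s\<bar> = \<bar>\<Sum>i\<le>N. coeff p i * s ^ i\<bar>"
    by (simp add: poly_altdef, rule arg_cong[where f=abs], rule sum.mono_neutral_left)
       (use assms in \<open>auto simp: coeff_eq_0\<close>)
  also have "\<dots> \<le> (\<Sum>i\<le>N. \<bar>coeff p i\<bar> * max 1 s ^ N)"
  proof (rule order.trans[OF sum_abs], rule sum_mono)
    fix i assume "i \<in> {..N}"
    have "s ^ i \<le> max 1 s ^ i" using assms by (intro power_mono) auto
    also have "\<dots> \<le> max 1 s ^ N" using \<open>i \<in> {..N}\<close> by (intro power_increasing) auto
    finally show "\<bar>coeff p i * s ^ i\<bar> \<le> \<bar>coeff p i\<bar> * max 1 s ^ N"
      using assms by (simp add: abs_mult mult_left_mono)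
  qed
  also have "\<dots> = coeff_norm p * max 1 s ^ N"
    using assms by (simp add: coeff_norm_eq_sum sum_distrib_right)
  finally show ?thesis .
qed

lemma coeff_norm_diff_le: "coeff_norm (p - q) \<le> coeff_norm p + coeff_norm q"
proof -
  define N where "N = max (degree p) (degree q)"
  have "coeff_norm (p - q) = (\<Sum>i\<le>N. \<bar>coeff p i - coeff q i\<bar>)"
    by (subst coeff_norm_eq_sum[of _ N]) (auto simp: N_def degree_diff_le_max)
  also have "\<dots> \<le> (\<Sum>i\<le>N. \<bar>coeff p i\<bar> + \<bar>coeff q i\<bar>)"
    by (intro sum_mono) auto
  also have "\<dots> = coeff_norm p + coeff_norm q"
    using coeff_norm_eq_sum[of p N] coeff_norm_eq_sum[of q N] by (simp add: sum.distrib N_def)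
  finally show ?thesis .
qed

lemma coeff_norm_pCons_0: "coeff_norm (pCons 0 q) = coeff_norm q"
proof -
  have "coeff_norm (pCons 0 q) = (\<Sum>i\<le>Suc (degree q). \<bar>coeff (pCons 0 q) i\<bar>)"
    by (rule coeff_norm_eq_sum) (simp add: degree_pCons_le)
  also have "\<dots> = coeff_norm q"
    by (subst sum.atMost_Suc_shift) (simp add: coeff_norm_def)
  finally show ?thesis .
qed

lemma coeff_norm_pderiv_le: "coeff_norm (pderiv p) \<le> real (degree p) * coeff_norm p"
proof -
  define d where "d = degree p"
  have "coeff_norm (pderiv p) = (\<Sum>i\<le>d. \<bar>coeff (pderiv p) i\<bar>)"
    by (rule coeff_norm_eq_sum) (use degree_pderiv[of p] in \<open>auto simp: d_def\<close>)
  also have "\<dots> \<le> (\<Sum>i\<le>d. real d * \<bar>coeff p (Suc i)\<bar>)"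
  proof (rule sum_mono)
    fix i assume "i \<in> {..d}"
    show "\<bar>coeff (pderiv p) i\<bar> \<le> real d * \<bar>coeff p (Suc i)\<bar>"
    proof (cases "Suc i \<le> d")
      case True
      then show ?thesis by (simp add: coeff_pderiv abs_mult mult_right_mono)
    next
      case False
      then have "coeff p (Suc i) = 0" by (intro coeff_eq_0) (simp add: d_def)
      then show ?thesis by (simp add: coeff_pderiv)
    qed
  qed
  also have "\<dots> \<le> real d * coeff_norm p"
  proof -
    have "(\<Sum>i\<le>d. \<bar>coeff p (Suc i)\<bar>) \<le> (\<Sum>i\<le>Suc d. \<bar>coeff p i\<bar>)"
      unfolding sum.atMost_Suc_shift by simp
    also have "\<dots> = coeff_norm p"
      by (rule coeff_norm_eq_sum[symmetric]) (simp add: d_def)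
    finally show ?thesis
      by (simp add: sum_distrib_left[symmetric] mult_left_mono)
  qed
  finally show ?thesis by (simp add: d_def)
qed

lemma degree_flat_poly_le: "degree (flat_poly m) \<le> 2 * m"
proof (induction m)
  case (Suc m)
  have "degree (flat_poly m - pderiv (flat_poly m)) \<le> 2 * m"
    using Suc degree_pderiv[of "flat_poly m"]
      degree_diff_le_max[of "flat_poly m" "pderiv (flat_poly m)"] by linarith
  then show ?case
    using degree_mult_le[of "[:0, 0, 1:]" "flat_poly m - pderiv (flat_poly m)"] by simp
qed simp

lemma coeff_norm_flat_poly_le: "coeff_norm (flat_poly m) \<le> (2 * real m + 1) ^ m"
proof (induction m)
  case 0
  then show ?case by (simp add: coeff_norm_def)
next
  case (Suc m)
  have "coeff_norm (flat_poly (Suc m)) = coeff_norm (flat_poly m - pderiv (flat_poly m))"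
    by (simp add: coeff_norm_pCons_0)
  also have "\<dots> \<le> coeff_norm (flat_poly m) + real (degree (flat_poly m)) * coeff_norm (flat_poly m)"
    using coeff_norm_diff_le coeff_norm_pderiv_le by (meson add_left_mono order.trans)
  also have "\<dots> \<le> coeff_norm (flat_poly m) + 2 * real m * coeff_norm (flat_poly m)"
    using degree_flat_poly_le[of m] coeff_norm_nonneg[of "flat_poly m"]
    by (intro add_left_mono mult_right_mono) auto
  also have "\<dots> = (2 * real m + 1) * coeff_norm (flat_poly m)"
    by (simp add: algebra_simps)
  also have "\<dots> \<le> (2 * real m + 1) * (2 * real m + 1) ^ m"
    using Suc by (simp add: mult_left_mono)
  also have "\<dots> \<le> (2 * real (Suc m) + 1) ^ Suc m"
    by (simp only: power_Suc[symmetric]) (intro power_mono, auto)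
  finally show ?case .
qed

lemma abs_flat_deriv_le:
  "\<bar>flat_deriv m t\<bar> \<le> (2 * real m + 1) ^ m * max 1 (inverse t) ^ (2 * m)"
proof (cases "t > 0")
  case True
  have "\<bar>flat_deriv m t\<bar> \<le> \<bar>poly (flat_poly m) (inverse t)\<bar>"
    using True by (simp add: flat_deriv_def abs_mult mult_left_le)
  also have "\<dots> \<le> coeff_norm (flat_poly m) * max 1 (inverse t) ^ (2 * m)"
    using True degree_flat_poly_le by (simp add: abs_poly_le_coeff_norm)
  also have "\<dots> \<le> (2 * real m + 1) ^ m * max 1 (inverse t) ^ (2 * m)"
    by (intro mult_right_mono coeff_norm_flat_poly_le) auto
  finally show ?thesis .
qed (simp add: flat_deriv_def)

lemma real_analytic_eventually_zero_at_left:
  assumes "real_analytic_on f S" "x \<in> S" and left: "\<forall>\<^sub>F y in at_left x. f y = 0"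
  shows "\<forall>\<^sub>F y in nhds x. f y = 0"
proof -
  obtain r a where r: "r > 0" and sums: "\<And>h. \<bar>h\<bar> < r \<Longrightarrow> (\<lambda>n. a n * h ^ n) sums f (x + h)"
    using assms(1,2) unfolding real_analytic_on_def by (metis add_diff_cancel_left')
  from left obtain b where "b < x" and b: "\<And>y. b < y \<Longrightarrow> y < x \<Longrightarrow> f y = 0"
    unfolding eventually_at_left_field by blast
  have left_0: "\<forall>\<^sub>F h in at_left 0. f (x + h) = 0"
    unfolding eventually_at_left_field using \<open>b < x\<close> by (intro exI[of _ "b - x"]) (auto intro: b)
  have a_zero: "a k = 0" for k
  proof (induction k rule: less_induct)
    case (less k)
    define F where "F h = f (x + h) / h ^ k" for h
    have "(\<lambda>n. a (n + k) * h ^ n) sums F h" if "h \<noteq> 0" "norm h < r" for h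
    proof -
      have "(\<lambda>n. a (n + k) * h ^ (n + k)) sums f (x + h)"
        using sums_split_initial_segment[OF sums[of h], of k] that less.IH by simp
      from sums_divide[OF this, of "h ^ k"] show ?thesis
        using that by (simp add: F_def power_add)
    qed
    then have "(F \<longlongrightarrow> a (0 + k)) (at 0)"
      by (intro powser_limit_0_strong[OF r]) auto
    then have "(F \<longlongrightarrow> a k) (at_left 0)"
      by (simp add: filterlim_at_split)
    moreover have "(F \<longlongrightarrow> 0) (at_left 0)"
      by (rule tendsto_eventually) (use left_0 in \<open>eventually_elim, simp add: F_def\<close>)
    ultimately show ?case
      using tendsto_unique[OF trivial_limit_at_left_real] by blast
  qed
  have "f y = 0" if "dist y x < r" for y
    using sums_unique2[OF sums[of "y - x"]] that a_zero by (simp add: dist_real_def)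
  then show ?thesis
    unfolding eventually_nhds_metric using r by blast
qed

lemma not_real_analytic_flat_deriv_0: "\<not> real_analytic_on (flat_deriv 0) UNIV"
proof
  assume "real_analytic_on (flat_deriv 0) UNIV"
  moreover have "\<forall>\<^sub>F y in at_left 0. flat_deriv 0 y = 0"
    using eventually_neg_at_left_0 by eventually_elim (simp add: flat_deriv_def)
  ultimately obtain d where "d > 0" "\<And>y. dist y 0 < d \<Longrightarrow> flat_deriv 0 y = 0"
    using real_analytic_eventually_zero_at_left unfolding eventually_nhds_metric by blast
  then have "flat_deriv 0 (d / 2) = 0" by simp
  with \<open>d > 0\<close> show False by (simp add: flat_deriv_def)
qed

text \<open>\<open>wave_coeff n k\<close> is the coefficient of phi^(2k) in u_n, computed from the recursion
  u_(n+2) = 2 u_(n+1) + u_(n+1)'' - u_n.\<close>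
fun wave_coeff :: "nat \<Rightarrow> nat \<Rightarrow> real" where
  "wave_coeff 0 k = (if k = 0 then 1 else 0)"
| "wave_coeff (Suc 0) k = (if k = 0 then 1 else if k = 1 then 1/2 else 0)"
| "wave_coeff (Suc (Suc n)) k =
     2 * wave_coeff (Suc n) k + (if k = 0 then 0 else wave_coeff (Suc n) (k - 1)) - wave_coeff n k"

lemma wave_coeff_eq_0: "n < k \<Longrightarrow> wave_coeff n k = 0"
  by (induction n k rule: wave_coeff.induct) auto

lemma abs_wave_coeff_le: "\<bar>wave_coeff n k\<bar> \<le> 4 ^ n"
proof (induction n k rule: wave_coeff.induct)
  case (3 n k)
  have "\<bar>(if k = 0 then 0 else wave_coeff (Suc n) (k - 1))\<bar> \<le> 4 ^ Suc n"
    using 3 by auto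
  then show ?case
    using 3 by simp
qed auto

definition wave_sol :: "nat \<Rightarrow> nat \<Rightarrow> real \<Rightarrow> real" where
  "wave_sol j n t = (\<Sum>k\<le>n. wave_coeff n k * flat_deriv (2 * k + j) t)"

lemma has_real_derivative_wave_sol:
  "(wave_sol j n has_real_derivative wave_sol (Suc j) n t) (at t)"
  unfolding wave_sol_def
  by (intro DERIV_sum DERIV_cmult) (simp add: has_real_derivative_flat_deriv)

lemma continuous_on_wave_sol: "continuous_on UNIV (wave_sol j n)"
  unfolding wave_sol_def
  by (intro continuous_intros continuous_on_flat_deriv[THEN continuous_on_subset]) auto

lemma wave_sol_at_0: "wave_sol j n 0 = 0"
  by (simp add: wave_sol_def flat_deriv_def)

lemma wave_sol_eq_sum_upto:
  "n \<le> N \<Longrightarrow> wave_sol j n t = (\<Sum>k\<le>N. wave_coeff n k * flat_deriv (2 * k + j) t)"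
  unfolding wave_sol_def by (rule sum.mono_neutral_left) (auto simp: wave_coeff_eq_0)

lemma wave_sol_recurrence:
  "wave_sol (j + 2) (Suc m) t = wave_sol j (Suc (Suc m)) t + wave_sol j m t - 2 * wave_sol j (Suc m) t"
proof -
  have "wave_sol (j + 2) (Suc m) t =
      (\<Sum>k\<le>Suc (Suc m). (if k = 0 then 0 else wave_coeff (Suc m) (k - 1)) * flat_deriv (2 * k + j) t)"
    unfolding wave_sol_def by (subst sum.atMost_Suc_shift) (simp add: algebra_simps)
  also have "\<dots> = (\<Sum>k\<le>Suc (Suc m).
      (wave_coeff (Suc (Suc m)) k + wave_coeff m k - 2 * wave_coeff (Suc m) k) * flat_deriv (2 * k + j) t)"
    by (intro sum.cong refl) simp
  also have "\<dots> = wave_sol j (Suc (Suc m)) t + wave_sol j m t - 2 * wave_sol j (Suc m) t"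
    by (simp add: wave_sol_eq_sum_upto[of m "Suc (Suc m)"] wave_sol_eq_sum_upto[of "Suc m" "Suc (Suc m)"]
        wave_sol_def sum.distrib sum_subtractf sum_distrib_left algebra_simps wave_coeff_eq_0)
  finally show ?thesis .
qed

lemma wave_sol_recurrence_0:
  "wave_sol (j + 2) 0 t = 2 * wave_sol j 1 t - 2 * wave_sol j 0 t"
  by (simp add: wave_sol_def numeral_2_eq_2 algebra_simps)

lemma line_laplacian_even_extension:
  fixes v w :: "nat \<Rightarrow> real"
  assumes w0: "w 0 = 2 * v 1 - 2 * v 0"
    and w_Suc: "\<And>m. w (Suc m) = v (Suc (Suc m)) + v m - 2 * v (Suc m)"
  shows "w (nat \<bar>x\<bar>) = line_laplacian (\<lambda>y. v (nat \<bar>y\<bar>)) x"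
proof -
  consider "x = 0" | "x > 0" | "x < 0" by linarith
  then show ?thesis
  proof cases
    case 1
    then show ?thesis by (simp add: line_laplacian_def w0)
  next
    case 2
    define m where "m = nat (x - 1)"
    have "nat \<bar>x\<bar> = Suc m" "nat \<bar>x + 1\<bar> = Suc (Suc m)" "nat \<bar>x - 1\<bar> = m"
      using 2 by (simp_all add: m_def)
    then show ?thesis by (simp add: line_laplacian_def w_Suc)
  next
    case 3
    define m where "m = nat (- x - 1)"
    have "nat \<bar>x\<bar> = Suc m" "nat \<bar>x - 1\<bar> = Suc (Suc m)" "nat \<bar>x + 1\<bar> = m"
      using 3 by (simp_all add: m_def)
    then show ?thesis by (simp add: line_laplacian_def w_Suc)
  qed
qed

lemma abs_flat_deriv_even_le:
  assumes "k \<le> n"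
  shows "\<bar>flat_deriv (2 * k) t\<bar> \<le> (4 * real n + 1) ^ (2 * n) * max 1 (inverse t) ^ (4 * n)"
proof -
  have "\<bar>flat_deriv (2 * k) t\<bar> \<le> (4 * real k + 1) ^ (2 * k) * max 1 (inverse t) ^ (4 * k)"
    using abs_flat_deriv_le[of "2 * k" t] by simp
  also have "\<dots> \<le> (4 * real n + 1) ^ (2 * n) * max 1 (inverse t) ^ (4 * n)"
  proof (intro mult_mono)
    have "(4 * real k + 1) ^ (2 * k) \<le> (4 * real n + 1) ^ (2 * k)"
      using assms by (intro power_mono) auto
    also have "\<dots> \<le> (4 * real n + 1) ^ (2 * n)"
      using assms by (intro power_increasing) auto
    finally show "(4 * real k + 1) ^ (2 * k) \<le> (4 * real n + 1) ^ (2 * n)" .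
  qed (use assms in \<open>auto intro: power_increasing\<close>)
  finally show ?thesis .
qed

lemma abs_wave_sol_le:
  assumes "n \<ge> 1"
  shows "\<bar>wave_sol 0 n t\<bar> \<le> (200 * max 1 (inverse t) ^ 4) ^ n * real n ^ (2 * n)"
proof -
  define S where "S = max 1 (inverse t)"
  have "\<bar>wave_sol 0 n t\<bar> \<le> (\<Sum>k\<le>n. 4 ^ n * ((4 * real n + 1) ^ (2 * n) * S ^ (4 * n)))"
    unfolding wave_sol_def S_def
    by (rule order.trans[OF sum_abs], intro sum_mono)
       (auto simp: abs_mult intro!: mult_mono abs_wave_coeff_le abs_flat_deriv_even_le)
  also have "\<dots> = (real n + 1) * 4 ^ n * (4 * real n + 1) ^ (2 * n) * S ^ (4 * n)"
    by simp
  also have "\<dots> \<le> 2 ^ n * 4 ^ n * (5 * real n) ^ (2 * n) * S ^ (4 * n)"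
  proof -
    have "real (n + 1) \<le> real (2 ^ n)"
      using less_exp[of n] by (intro of_nat_mono) linarith
    moreover have "(4 * real n + 1) ^ (2 * n) \<le> (5 * real n) ^ (2 * n)"
      using assms by (intro power_mono) auto
    ultimately show ?thesis
      by (intro mult_mono) (auto simp: S_def)
  qed
  also have "\<dots> = (200 * S ^ 4) ^ n * real n ^ (2 * n)"
  proof -
    have "(5 * real n) ^ (2 * n) = 25 ^ n * real n ^ (2 * n)"
      by (simp add: power_mult_distrib power_mult)
    moreover have "(200::real) ^ n = 2 ^ n * 4 ^ n * 25 ^ n"
      by (simp flip: power_mult_distrib)
    ultimately show ?thesis
      by (simp add: power_mult_distrib power_mult[of S 4 n, symmetric] mult.commute[of 4] algebra_simps)
  qed
  finally show ?thesis by (simp add: S_def)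
qed

lemma exp_linear_minus_n_ln_n_tendsto_0:
  fixes e a :: real
  assumes "e > 0"
  shows "((\<lambda>x::real. exp (a * x - e * x * ln x)) \<longlongrightarrow> 0) at_top"
  using assms by real_asymp

text \<open>A^n n^(2n) = exp(n ln A + 2 n ln n), so the weight leaves exp(n ln A - e n ln n).\<close>
lemma tendsto_zero_weighted_exp_n_ln_n:
  fixes a :: "nat \<Rightarrow> real" and e A :: real
  assumes "e > 0" "A > 0" and bound: "\<And>n. n \<ge> 1 \<Longrightarrow> \<bar>a n\<bar> \<le> A ^ n * real n ^ (2 * n)"
  shows "((\<lambda>n. \<bar>a n\<bar> * exp (- (2 + e) * real n * ln (real n))) \<longlongrightarrow> 0) sequentially"
proof (rule Lim_null_comparison)
  show "((\<lambda>n. exp (ln A * real n - e * real n * ln (real n))) \<longlongrightarrow> 0) sequentially"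
    using filterlim_compose[OF exp_linear_minus_n_ln_n_tendsto_0[OF \<open>e > 0\<close>]
        filterlim_real_sequentially] by simp
  show "\<forall>\<^sub>F n in sequentially. norm (\<bar>a n\<bar> * exp (- (2 + e) * real n * ln (real n)))
      \<le> exp (ln A * real n - e * real n * ln (real n))"
    using eventually_ge_at_top[of "1::nat"]
  proof eventually_elim
    case (elim n)
    have "norm (\<bar>a n\<bar> * exp (- (2 + e) * real n * ln (real n)))
        \<le> A ^ n * real n ^ (2 * n) * exp (- (2 + e) * real n * ln (real n))"
      using bound[OF elim] by (simp add: mult_right_mono)
    also have "A ^ n = exp (real n * ln A)"
      using \<open>A > 0\<close> by (simp add: exp_of_nat_mult)
    also have "real n ^ (2 * n) = exp (real (2 * n) * ln (real n))"
      by (simp only: exp_of_nat_mult) (use elim in simp)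
    also have "exp (real n * ln A) * exp (real (2 * n) * ln (real n)) * exp (- (2 + e) * real n * ln (real n))
        = exp (ln A * real n - e * real n * ln (real n))"
      by (simp add: exp_add[symmetric] algebra_simps)
    finally show ?case .
  qed
qed

lemma filterlim_nat_abs_at_top: "filterlim (\<lambda>x::int. nat \<bar>x\<bar>) sequentially at_top"
  unfolding filterlim_at_top
proof
  fix Z :: nat
  show "\<forall>\<^sub>F x in at_top. Z \<le> nat \<bar>x\<bar>"
    using eventually_ge_at_top[of "int Z"] by eventually_elim auto
qed

lemma filterlim_nat_abs_at_bot: "filterlim (\<lambda>x::int. nat \<bar>x\<bar>) sequentially at_bot"
  unfolding filterlim_at_top
proof
  fix Z :: nat
  show "\<forall>\<^sub>F x in at_bot. Z \<le> nat \<bar>x\<bar>"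
    using eventually_le_at_bot[of "- int Z"] by eventually_elim auto
qed

theorem theorem3p1:
  fixes \<epsilon> :: real
  assumes "\<epsilon> > 0"
  shows "\<exists>u :: real \<Rightarrow> int \<Rightarrow> real.
    (\<forall>x. \<exists>u1 u2 :: real \<Rightarrow> real.
        (\<forall>t. ((\<lambda>s. u s x) has_real_derivative u1 t) (at t)) \<and>
        (\<forall>t. (u1 has_real_derivative u2 t) (at t)) \<and>
        continuous_on UNIV u2 \<and>
        (\<forall>t. u2 t = line_laplacian (u t) x) \<and>
        u 0 x = 0 \<and> u1 0 = 0) \<and>
    (\<exists>t x. u t x \<noteq> 0) \<and>
    \<not> real_analytic_on (\<lambda>t. u t 0) UNIV \<and>
    (\<forall>t. ((\<lambda>x::int. \<bar>u t x\<bar> * exp (- (2 + \<epsilon>) * real_of_int \<bar>x\<bar> * ln (real_of_int \<bar>x\<bar>)))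
            \<longlongrightarrow> 0) at_top \<and>
         ((\<lambda>x::int. \<bar>u t x\<bar> * exp (- (2 + \<epsilon>) * real_of_int \<bar>x\<bar> * ln (real_of_int \<bar>x\<bar>)))
            \<longlongrightarrow> 0) at_bot)"
proof (intro exI[of _ "\<lambda>t x. wave_sol 0 (nat \<bar>x\<bar>) t"] conjI allI exI)
  fix x :: int and t :: real
  show "((\<lambda>s. wave_sol 0 (nat \<bar>x\<bar>) s) has_real_derivative wave_sol 1 (nat \<bar>x\<bar>) t) (at t)"
    "(wave_sol 1 (nat \<bar>x\<bar>) has_real_derivative wave_sol 2 (nat \<bar>x\<bar>) t) (at t)"
    using has_real_derivative_wave_sol[of _ "nat \<bar>x\<bar>"] by (simp_all add: numeral_2_eq_2)
  show "wave_sol 2 (nat \<bar>x\<bar>) t = line_laplacian (\<lambda>y. wave_sol 0 (nat \<bar>y\<bar>) t) x"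
    using wave_sol_recurrence_0[of 0 t] wave_sol_recurrence[of 0 _ t]
    by (intro line_laplacian_even_extension[where v="\<lambda>n. wave_sol 0 n t" and w="\<lambda>n. wave_sol 2 n t"])
       (simp_all add: numeral_2_eq_2)
  let ?h = "\<lambda>n. \<bar>wave_sol 0 n t\<bar> * exp (- (2 + \<epsilon>) * real n * ln (real n))"
  have "(?h \<longlongrightarrow> 0) sequentially"
    using assms abs_wave_sol_le
    by (intro tendsto_zero_weighted_exp_n_ln_n[where A="200 * max 1 (inverse t) ^ 4"]) auto
  from filterlim_compose[OF this filterlim_nat_abs_at_top] filterlim_compose[OF this filterlim_nat_abs_at_bot]
  show "((\<lambda>x::int. \<bar>wave_sol 0 (nat \<bar>x\<bar>) t\<bar> * exp (- (2 + \<epsilon>) * real_of_int \<bar>x\<bar> * ln (real_of_int \<bar>x\<bar>)))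
      \<longlongrightarrow> 0) at_top"
    "((\<lambda>x::int. \<bar>wave_sol 0 (nat \<bar>x\<bar>) t\<bar> * exp (- (2 + \<epsilon>) * real_of_int \<bar>x\<bar> * ln (real_of_int \<bar>x\<bar>)))
      \<longlongrightarrow> 0) at_bot"
    by (simp_all add: o_def)
next
  show "\<not> real_analytic_on (\<lambda>t. wave_sol 0 (nat \<bar>0::int\<bar>) t) UNIV"
    using not_real_analytic_flat_deriv_0 by (simp add: wave_sol_def)
  show "wave_sol 0 (nat \<bar>0::int\<bar>) 1 \<noteq> 0"
    by (simp add: wave_sol_def flat_deriv_def)
qed (auto simp: wave_sol_at_0 continuous_on_wave_sol)

end
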